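(* Let $R$ be a ring, $M$ a right $R$-module, and $I$ a two-sided ideal of $R$ with $I\subseteq \mathrm{Ann}_R(M)$ (so $M$ is naturally a right $R/I$-module via $m(r+I)=mr$). If $M$ is an $\aleph_0$-injective $R$-module, then $M$ is an $\aleph_0$-injective $R/I$-module. Conversely, if $R$ is right fully idempotent and $M$ is an $\aleph_0$-injective $R/I$-module, then $M$ is an $\aleph_0$-injective $R$-module.
   Context: Rings are associative with identity; modules are unitary right modules. A right $S$-module $M$ is $\aleph_0$-injective if for every countably generated right ideal $J$ of $S$ and every $S$-homomorphism $f:J\to M$ there is an $S$-homomorphism $\bar f:S\to M$ with $\bar f|_J=f$. A ring $R$ is right fully idempotent if every right ideal $J$ of $R$ satisfies $J^2=J$. *)

theory Defs
  imports "HOL-Algebra.Algebra"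
begin

text \<open>A right module over a (not necessarily commutative) ring S:
  M supplies the additive abelian group (only carrier, addition, zero are used),
  act m r is the scalar action m r.\<close>
definition right_module ::
  "('r, 'c) ring_scheme \<Rightarrow> ('m, 'd) ring_scheme \<Rightarrow> ('m \<Rightarrow> 'r \<Rightarrow> 'm) \<Rightarrow> bool" where
  "right_module S M act \<longleftrightarrow> ring S \<and> abelian_group M \<and>
     (\<forall>m\<in>carrier M. \<forall>r\<in>carrier S. act m r \<in> carrier M) \<and>
     (\<forall>m\<in>carrier M. \<forall>n\<in>carrier M. \<forall>r\<in>carrier S. act (m \<oplus>\<^bsub>M\<^esub> n) r = act m r \<oplus>\<^bsub>M\<^esub> act n r) \<and>
     (\<forall>m\<in>carrier M. \<forall>r\<in>carrier S. \<forall>s\<in>carrier S. act m (r \<oplus>\<^bsub>S\<^esub> s) = act m r \<oplus>\<^bsub>M\<^esub> act m s) \<and>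
     (\<forall>m\<in>carrier M. \<forall>r\<in>carrier S. \<forall>s\<in>carrier S. act m (r \<otimes>\<^bsub>S\<^esub> s) = act (act m r) s) \<and>
     (\<forall>m\<in>carrier M. act m \<one>\<^bsub>S\<^esub> = m)"

definition right_ideal :: "('r, 'c) ring_scheme \<Rightarrow> 'r set \<Rightarrow> bool" where
  "right_ideal S J \<longleftrightarrow> additive_subgroup J S \<and> (\<forall>a\<in>J. \<forall>x\<in>carrier S. a \<otimes>\<^bsub>S\<^esub> x \<in> J)"

definition gen_right_ideal :: "('r, 'c) ring_scheme \<Rightarrow> 'r set \<Rightarrow> 'r set" where
  "gen_right_ideal S Y = {y. \<forall>L. right_ideal S L \<and> Y \<subseteq> L \<longrightarrow> y \<in> L}"

definition countably_generated_right_ideal :: "('r, 'c) ring_scheme \<Rightarrow> 'r set \<Rightarrow> bool" where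
  "countably_generated_right_ideal S J \<longleftrightarrow>
     right_ideal S J \<and> (\<exists>Y. countable Y \<and> Y \<subseteq> carrier S \<and> J = gen_right_ideal S Y)"

definition rmod_hom ::
  "('r, 'c) ring_scheme \<Rightarrow> ('m, 'd) ring_scheme \<Rightarrow> ('m \<Rightarrow> 'r \<Rightarrow> 'm) \<Rightarrow> 'r set \<Rightarrow> ('r \<Rightarrow> 'm) \<Rightarrow> bool" where
  "rmod_hom S M act J f \<longleftrightarrow>
     (\<forall>x\<in>J. f x \<in> carrier M) \<and>
     (\<forall>x\<in>J. \<forall>y\<in>J. f (x \<oplus>\<^bsub>S\<^esub> y) = f x \<oplus>\<^bsub>M\<^esub> f y) \<and>
     (\<forall>x\<in>J. \<forall>r\<in>carrier S. f (x \<otimes>\<^bsub>S\<^esub> r) = act (f x) r)"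

definition aleph0_injective ::
  "('r, 'c) ring_scheme \<Rightarrow> ('m, 'd) ring_scheme \<Rightarrow> ('m \<Rightarrow> 'r \<Rightarrow> 'm) \<Rightarrow> bool" where
  "aleph0_injective S M act \<longleftrightarrow>
     (\<forall>J f. countably_generated_right_ideal S J \<and> rmod_hom S M act J f \<longrightarrow>
        (\<exists>g. rmod_hom S M act (carrier S) g \<and> (\<forall>x\<in>J. g x = f x)))"

definition annihilator ::
  "('r, 'c) ring_scheme \<Rightarrow> ('m, 'd) ring_scheme \<Rightarrow> ('m \<Rightarrow> 'r \<Rightarrow> 'm) \<Rightarrow> 'r set" where
  "annihilator S M act = {r \<in> carrier S. \<forall>m\<in>carrier M. act m r = \<zero>\<^bsub>M\<^esub>}"

definition ideal_square :: "('r, 'c) ring_scheme \<Rightarrow> 'r set \<Rightarrow> 'r set" where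
  "ideal_square S J = {x. \<exists>(n::nat) a b. (\<forall>i<n. a i \<in> J \<and> b i \<in> J) \<and>
      x = finsum S (\<lambda>i. a i \<otimes>\<^bsub>S\<^esub> b i) {..<n}}"

definition right_fully_idempotent :: "('r, 'c) ring_scheme \<Rightarrow> bool" where
  "right_fully_idempotent S \<longleftrightarrow> (\<forall>J. right_ideal S J \<longrightarrow> ideal_square S J = J)"

text \<open>Induced action of R/I on M: m (r + I) = m r (well defined when I \<subseteq> Ann(M)).\<close>
definition quot_act :: "('m \<Rightarrow> 'r \<Rightarrow> 'm) \<Rightarrow> 'm \<Rightarrow> 'r set \<Rightarrow> 'm" where
  "quot_act act m C = act m (SOME r. r \<in> C)"

end

theory Submission
  imports Defs
begin

(* Both directions of the theorem, for the quotient map R \<rightarrow> R/I, are instances of a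
   transfer principle for a surjective ring homomorphism h : R \<rightarrow> Q and a module M on which the
   R-action factors through h (act m r = actQ m (h r)):
   - countably generated right ideals of Q are exactly the images of countably generated right
     ideals of R, since h maps the right ideal generated by Y onto the one generated by h`Y;
   - a Q-linear map on a right ideal of Q pulls back along h to an R-linear map, and an
     R-linear map f on a right ideal J descends to h`J as soon as f vanishes on J \<inter> ker h.
   From R-injectivity to Q-injectivity: lift the Q-datum, extend over R, and descend the
   extension (an R-linear map on all of R kills ker h, because ker h annihilates M).
   From Q-injectivity to R-injectivity: descend the R-datum, extend over Q, and pull back;
   here the descent needs f to vanish on J \<inter> I.  This is where right full idempotence enters:
   J \<inter> I = (J \<inter> I)\<^sup>2, so each x \<in> J \<inter> I is a sum of products a b with a \<in> J and b \<in> I,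
   and f (a b) = f(a) b = 0.  The file develops right ideals, the transfer lemmas for
   homomorphisms and for \<aleph>\<^sub>0-injectivity, the quotient-specific facts, and finally the theorem. *)


section \<open>Right ideals\<close>

lemma right_idealI:
  assumes R: "ring S" and sub: "J \<subseteq> carrier S" and zero_mem: "\<zero>\<^bsub>S\<^esub> \<in> J"
    and add_mem: "\<And>a b. a \<in> J \<Longrightarrow> b \<in> J \<Longrightarrow> a \<oplus>\<^bsub>S\<^esub> b \<in> J"
    and mul_mem: "\<And>a x. a \<in> J \<Longrightarrow> x \<in> carrier S \<Longrightarrow> a \<otimes>\<^bsub>S\<^esub> x \<in> J"
  shows "right_ideal S J"
proof -
  interpret ring S by (rule R)
  \<comment> \<open>Closure under negation is not assumed: -a = a (-1) comes from the right multiplication.\<close>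
  have neg: "\<ominus>\<^bsub>S\<^esub> a \<in> J" if a: "a \<in> J" for a
  proof -
    have "a \<otimes>\<^bsub>S\<^esub> (\<ominus>\<^bsub>S\<^esub> \<one>\<^bsub>S\<^esub>) = \<ominus>\<^bsub>S\<^esub> a"
      using a sub by (auto simp: r_minus)
    then show ?thesis using mul_mem[OF a] by force
  qed
  have "subgroup J (add_monoid S)"
    by (rule add.subgroupI) (use sub zero_mem add_mem neg in \<open>auto simp: a_inv_def[symmetric]\<close>)
  then show ?thesis unfolding right_ideal_def using mul_mem additive_subgroupI by blast
qed

lemma right_idealD:
  assumes "right_ideal S J"
  shows "J \<subseteq> carrier S" "\<zero>\<^bsub>S\<^esub> \<in> J"
    "\<And>a b. a \<in> J \<Longrightarrow> b \<in> J \<Longrightarrow> a \<oplus>\<^bsub>S\<^esub> b \<in> J"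
    "\<And>a. a \<in> J \<Longrightarrow> \<ominus>\<^bsub>S\<^esub> a \<in> J"
    "\<And>a x. a \<in> J \<Longrightarrow> x \<in> carrier S \<Longrightarrow> a \<otimes>\<^bsub>S\<^esub> x \<in> J"
  using assms unfolding right_ideal_def
  by (auto dest: additive_subgroup.a_subset additive_subgroup.a_closed
      additive_subgroup.zero_closed additive_subgroup.a_inv_closed)

lemma right_ideal_carrier: "ring S \<Longrightarrow> right_ideal S (carrier S)"
  by (rule right_idealI) (auto simp: ring.ring_simprules)

lemma ideal_imp_right_ideal: "ideal I S \<Longrightarrow> right_ideal S I"
  unfolding right_ideal_def by (auto intro: ideal.axioms(1) ideal.I_r_closed)

lemma right_ideal_Int:
  assumes "ring S" "right_ideal S J" "right_ideal S K"
  shows "right_ideal S (J \<inter> K)"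
proof (rule right_idealI[OF assms(1)])
  note J = right_idealD[OF assms(2)] and K = right_idealD[OF assms(3)]
  show "J \<inter> K \<subseteq> carrier S" "\<zero>\<^bsub>S\<^esub> \<in> J \<inter> K" using J(1,2) K(2) by auto
  show "a \<oplus>\<^bsub>S\<^esub> b \<in> J \<inter> K" if "a \<in> J \<inter> K" "b \<in> J \<inter> K" for a b
    using that J(3) K(3) by blast
  show "a \<otimes>\<^bsub>S\<^esub> x \<in> J \<inter> K" if "a \<in> J \<inter> K" "x \<in> carrier S" for a x
    using that J(5) K(5) by blast
qed

lemma gen_right_ideal_least:
  "right_ideal S L \<Longrightarrow> Y \<subseteq> L \<Longrightarrow> gen_right_ideal S Y \<subseteq> L"
  unfolding gen_right_ideal_def by blast

lemma gen_right_ideal_generators: "Y \<subseteq> gen_right_ideal S Y"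
  unfolding gen_right_ideal_def by blast

lemma gen_right_ideal_right_ideal:
  assumes R: "ring S" and Y: "Y \<subseteq> carrier S"
  shows "right_ideal S (gen_right_ideal S Y)"
proof (rule right_idealI[OF R])
  show "gen_right_ideal S Y \<subseteq> carrier S"
    using gen_right_ideal_least[OF right_ideal_carrier[OF R] Y] .
  have in_all: "x \<in> gen_right_ideal S Y \<longleftrightarrow> (\<forall>L. right_ideal S L \<and> Y \<subseteq> L \<longrightarrow> x \<in> L)" for x
    unfolding gen_right_ideal_def by simp
  show "\<zero>\<^bsub>S\<^esub> \<in> gen_right_ideal S Y"
    unfolding in_all by (auto dest: right_idealD(2))
  show "a \<oplus>\<^bsub>S\<^esub> b \<in> gen_right_ideal S Y"
    if "a \<in> gen_right_ideal S Y" "b \<in> gen_right_ideal S Y" for a b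
    using that unfolding in_all by (auto dest: right_idealD(3))
  show "a \<otimes>\<^bsub>S\<^esub> x \<in> gen_right_ideal S Y"
    if "a \<in> gen_right_ideal S Y" "x \<in> carrier S" for a x
    using that unfolding in_all by (auto dest: right_idealD(5))
qed


section \<open>Right ideals along a surjective ring homomorphism\<close>

lemma right_ideal_image:
  assumes RR: "ring R" and RQ: "ring Q" and hom: "h \<in> ring_hom R Q"
    and surj: "h ` carrier R = carrier Q" and J: "right_ideal R J"
  shows "right_ideal Q (h ` J)"
proof (rule right_idealI[OF RQ])
  note J_props = right_idealD[OF J]
  show "h ` J \<subseteq> carrier Q" using J_props(1) ring_hom_closed[OF hom] by blast
  show "\<zero>\<^bsub>Q\<^esub> \<in> h ` J"
    using ring_hom_zero[OF hom RR RQ] J_props(2) by force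
  show "a \<oplus>\<^bsub>Q\<^esub> b \<in> h ` J" if "a \<in> h ` J" "b \<in> h ` J" for a b
    using that J_props(1,3) ring_hom_add[OF hom] by (force simp: subset_iff)
  show "a \<otimes>\<^bsub>Q\<^esub> b \<in> h ` J" if a: "a \<in> h ` J" and b: "b \<in> carrier Q" for a b
  proof -
    obtain x where "x \<in> J" "a = h x" using a by blast
    moreover obtain y where "y \<in> carrier R" "b = h y" using b surj by blast
    ultimately show ?thesis using J_props(1,5) ring_hom_mult[OF hom] by (force simp: subset_iff)
  qed
qed

lemma right_ideal_vimage:
  assumes RR: "ring R" and RQ: "ring Q" and hom: "h \<in> ring_hom R Q"
    and L: "right_ideal Q L"
  shows "right_ideal R {x \<in> carrier R. h x \<in> L}"
proof (rule right_idealI[OF RR])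
  note L_props = right_idealD[OF L]
  show "\<zero>\<^bsub>R\<^esub> \<in> {x \<in> carrier R. h x \<in> L}"
    using ring_hom_zero[OF hom RR RQ] L_props(2) ring.ring_simprules(2)[OF RR] by auto
  show "a \<oplus>\<^bsub>R\<^esub> b \<in> {x \<in> carrier R. h x \<in> L}"
    if "a \<in> {x \<in> carrier R. h x \<in> L}" "b \<in> {x \<in> carrier R. h x \<in> L}" for a b
    using that ring_hom_add[OF hom] L_props(3) ring.ring_simprules(1)[OF RR] by auto
  show "a \<otimes>\<^bsub>R\<^esub> b \<in> {x \<in> carrier R. h x \<in> L}"
    if "a \<in> {x \<in> carrier R. h x \<in> L}" "b \<in> carrier R" for a b
    using that ring_hom_mult[OF hom] L_props(5) ring.ring_simprules(5)[OF RR]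
      ring_hom_closed[OF hom] by auto
qed auto

lemma gen_right_ideal_image:
  assumes RR: "ring R" and RQ: "ring Q" and hom: "h \<in> ring_hom R Q"
    and surj: "h ` carrier R = carrier Q" and Y: "Y \<subseteq> carrier R"
  shows "gen_right_ideal Q (h ` Y) = h ` gen_right_ideal R Y"
proof
  show "gen_right_ideal Q (h ` Y) \<subseteq> h ` gen_right_ideal R Y"
    using gen_right_ideal_least
      [OF right_ideal_image[OF RR RQ hom surj gen_right_ideal_right_ideal[OF RR Y]]]
      gen_right_ideal_generators[of Y R] by blast
  show "h ` gen_right_ideal R Y \<subseteq> gen_right_ideal Q (h ` Y)"
  proof (clarsimp simp: gen_right_ideal_def[of Q])
    fix y L assume y: "y \<in> gen_right_ideal R Y" and L: "right_ideal Q L" "h ` Y \<subseteq> L"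
    have "gen_right_ideal R Y \<subseteq> {x \<in> carrier R. h x \<in> L}"
      by (rule gen_right_ideal_least[OF right_ideal_vimage[OF RR RQ hom L(1)]])
        (use L(2) Y in blast)
    then show "h y \<in> L" using y by blast
  qed
qed

lemma countably_generated_image:
  assumes RR: "ring R" and RQ: "ring Q" and hom: "h \<in> ring_hom R Q"
    and surj: "h ` carrier R = carrier Q" and J: "countably_generated_right_ideal R J"
  shows "countably_generated_right_ideal Q (h ` J)"
proof -
  obtain Y where Y: "countable Y" "Y \<subseteq> carrier R" "J = gen_right_ideal R Y"
    using J unfolding countably_generated_right_ideal_def by blast
  have "right_ideal Q (h ` J)"
    using J right_ideal_image[OF RR RQ hom surj]
    unfolding countably_generated_right_ideal_def by blast
  moreover have "h ` J = gen_right_ideal Q (h ` Y)"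
    using gen_right_ideal_image[OF RR RQ hom surj Y(2)] Y(3) by simp
  moreover have "countable (h ` Y)" "h ` Y \<subseteq> carrier Q"
    using Y(1,2) ring_hom_closed[OF hom] by auto
  ultimately show ?thesis unfolding countably_generated_right_ideal_def by blast
qed

text \<open>Conversely every countably generated right ideal of Q is such an image: lift its
  generators through a right inverse of h.\<close>

lemma countably_generated_lift:
  assumes RR: "ring R" and RQ: "ring Q" and hom: "h \<in> ring_hom R Q"
    and surj: "h ` carrier R = carrier Q" and Jb: "countably_generated_right_ideal Q Jb"
  obtains J where "countably_generated_right_ideal R J" "h ` J = Jb"
proof -
  obtain Yb where Yb: "countable Yb" "Yb \<subseteq> carrier Q" "Jb = gen_right_ideal Q Yb"
    using Jb unfolding countably_generated_right_ideal_def by blast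
  define Y where "Y = inv_into (carrier R) h ` Yb"
  have Y: "countable Y" "Y \<subseteq> carrier R" "h ` Y = Yb"
    unfolding Y_def using Yb(1,2) surj inv_into_into[of _ h "carrier R"]
      image_inv_into_cancel[OF surj Yb(2)] by auto
  define J where "J = gen_right_ideal R Y"
  have "countably_generated_right_ideal R J"
    unfolding countably_generated_right_ideal_def J_def
    using gen_right_ideal_right_ideal[OF RR Y(2)] Y(1,2) by blast
  moreover have "h ` J = Jb"
    unfolding J_def Yb(3) using gen_right_ideal_image[OF RR RQ hom surj Y(2)] Y(3) by simp
  ultimately show thesis by (rule that)
qed


section \<open>Module homomorphisms along a surjective ring homomorphism\<close>

lemma abelian_group_idem_zero:
  "abelian_group M \<Longrightarrow> x \<in> carrier M \<Longrightarrow> x = x \<oplus>\<^bsub>M\<^esub> x \<Longrightarrow> x = \<zero>\<^bsub>M\<^esub>"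
  by (metis abelian_group.a_transpose_inv abelian_group.l_neg)

lemma right_module_act_zero:
  assumes M: "right_module S M act" and m: "m \<in> carrier M"
  shows "act m \<zero>\<^bsub>S\<^esub> = \<zero>\<^bsub>M\<^esub>"
proof -
  have S: "ring S" and MG: "abelian_group M" using M unfolding right_module_def by auto
  have "act m \<zero>\<^bsub>S\<^esub> = act m (\<zero>\<^bsub>S\<^esub> \<oplus>\<^bsub>S\<^esub> \<zero>\<^bsub>S\<^esub>)" by (simp add: ring.ring_simprules[OF S])
  also have "\<dots> = act m \<zero>\<^bsub>S\<^esub> \<oplus>\<^bsub>M\<^esub> act m \<zero>\<^bsub>S\<^esub>"
    using M m ring.ring_simprules(2)[OF S] unfolding right_module_def by blast
  finally have "act m \<zero>\<^bsub>S\<^esub> = act m \<zero>\<^bsub>S\<^esub> \<oplus>\<^bsub>M\<^esub> act m \<zero>\<^bsub>S\<^esub>" .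
  moreover have "act m \<zero>\<^bsub>S\<^esub> \<in> carrier M"
    using M m ring.ring_simprules(2)[OF S] unfolding right_module_def by blast
  ultimately show ?thesis using abelian_group_idem_zero[OF MG] by simp
qed

lemma rmod_hom_zero:
  assumes S: "ring S" and MG: "abelian_group M" and J: "right_ideal S J"
    and f: "rmod_hom S M act J f"
  shows "f \<zero>\<^bsub>S\<^esub> = \<zero>\<^bsub>M\<^esub>"
proof -
  have zero: "\<zero>\<^bsub>S\<^esub> \<in> J" by (rule right_idealD(2)[OF J])
  have "f \<zero>\<^bsub>S\<^esub> = f (\<zero>\<^bsub>S\<^esub> \<oplus>\<^bsub>S\<^esub> \<zero>\<^bsub>S\<^esub>)"
    by (simp add: ring.ring_simprules[OF S])
  also have "\<dots> = f \<zero>\<^bsub>S\<^esub> \<oplus>\<^bsub>M\<^esub> f \<zero>\<^bsub>S\<^esub>"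
    using f zero unfolding rmod_hom_def by blast
  finally have "f \<zero>\<^bsub>S\<^esub> = f \<zero>\<^bsub>S\<^esub> \<oplus>\<^bsub>M\<^esub> f \<zero>\<^bsub>S\<^esub>" .
  moreover have "f \<zero>\<^bsub>S\<^esub> \<in> carrier M" using f zero unfolding rmod_hom_def by blast
  ultimately show ?thesis using abelian_group_idem_zero[OF MG] by simp
qed

locale factored_action =
  fixes R :: "('r, 'c) ring_scheme" and Q :: "('q, 'e) ring_scheme" and h :: "'r \<Rightarrow> 'q"
    and M :: "('m, 'd) ring_scheme" and act :: "'m \<Rightarrow> 'r \<Rightarrow> 'm" and actQ :: "'m \<Rightarrow> 'q \<Rightarrow> 'm"
  assumes ring_R: "ring R" and ring_Q: "ring Q" and hom: "h \<in> ring_hom R Q"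
    and surj: "h ` carrier R = carrier Q"
    and module: "right_module R M act"
    and compat: "\<And>m r. m \<in> carrier M \<Longrightarrow> r \<in> carrier R \<Longrightarrow> actQ m (h r) = act m r"
begin

lemma group_M: "abelian_group M"
  using module unfolding right_module_def by blast

lemma rmod_hom_pullback:
  assumes J: "J \<subseteq> carrier R" and sub: "h ` J \<subseteq> Jb" and fb: "rmod_hom Q M actQ Jb fb"
  shows "rmod_hom R M act J (\<lambda>x. fb (h x))"
  unfolding rmod_hom_def
proof (intro conjI ballI)
  note fb_props = fb[unfolded rmod_hom_def]
  fix x assume x: "x \<in> J"
  then have hx: "h x \<in> Jb" and xR: "x \<in> carrier R" using sub J by auto
  show "fb (h x) \<in> carrier M" using fb_props hx by blast
  show "fb (h (x \<oplus>\<^bsub>R\<^esub> y)) = fb (h x) \<oplus>\<^bsub>M\<^esub> fb (h y)" if y: "y \<in> J" for y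
  proof -
    have "h y \<in> Jb" "y \<in> carrier R" using y sub J by auto
    then show ?thesis using ring_hom_add[OF hom xR] fb_props hx by auto
  qed
  show "fb (h (x \<otimes>\<^bsub>R\<^esub> r)) = act (fb (h x)) r" if r: "r \<in> carrier R" for r
  proof -
    have "fb (h (x \<otimes>\<^bsub>R\<^esub> r)) = actQ (fb (h x)) (h r)"
      using ring_hom_mult[OF hom xR r] ring_hom_closed[OF hom r] fb_props hx by auto
    then show ?thesis using compat fb_props hx r by auto
  qed
qed

lemma rmod_hom_fibre_constant:
  assumes J: "right_ideal R J" and f: "rmod_hom R M act J f"
    and ker: "\<And>k. k \<in> J \<Longrightarrow> h k = \<zero>\<^bsub>Q\<^esub> \<Longrightarrow> f k = \<zero>\<^bsub>M\<^esub>"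
    and x: "x \<in> J" and y: "y \<in> J" and fibre: "h x = h y"
  shows "f x = f y"
proof -
  interpret ring R by (rule ring_R)
  interpret M: abelian_group M by (rule group_M)
  note J_props = right_idealD[OF J] and f_props = f[unfolded rmod_hom_def]
  have xR: "x \<in> carrier R" and yR: "y \<in> carrier R" using x y J_props(1) by auto
  define k where "k = x \<oplus>\<^bsub>R\<^esub> \<ominus>\<^bsub>R\<^esub> y"
  have kJ: "k \<in> J" unfolding k_def using J_props(3,4) x y by blast
  have "h k = h (y \<oplus>\<^bsub>R\<^esub> \<ominus>\<^bsub>R\<^esub> y)"
    unfolding k_def using xR yR fibre by (simp add: ring_hom_add[OF hom])
  also have "\<dots> = \<zero>\<^bsub>Q\<^esub>" using yR ring_hom_zero[OF hom ring_R ring_Q] by (simp add: r_neg)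
  finally have fk: "f k = \<zero>\<^bsub>M\<^esub>" using ker kJ by blast
  have "x = k \<oplus>\<^bsub>R\<^esub> y" unfolding k_def using xR yR by (simp add: a_assoc l_neg)
  then have "f x = f k \<oplus>\<^bsub>M\<^esub> f y" using f_props kJ y by metis
  then show ?thesis using fk f_props y by auto
qed

lemma rmod_hom_descend:
  assumes J: "right_ideal R J" and f: "rmod_hom R M act J f"
    and ker: "\<And>k. k \<in> J \<Longrightarrow> h k = \<zero>\<^bsub>Q\<^esub> \<Longrightarrow> f k = \<zero>\<^bsub>M\<^esub>"
  shows "rmod_hom Q M actQ (h ` J) (\<lambda>C. f (inv_into J h C))"
    and "\<And>x. x \<in> J \<Longrightarrow> f (inv_into J h (h x)) = f x"
proof -
  note J_props = right_idealD[OF J] and f_props = f[unfolded rmod_hom_def]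
  show descend: "f (inv_into J h (h x)) = f x" if x: "x \<in> J" for x
  proof -
    have "inv_into J h (h x) \<in> J" "h (inv_into J h (h x)) = h x"
      using x by (auto intro: inv_into_into f_inv_into_f)
    then show ?thesis using rmod_hom_fibre_constant[OF J f] ker x by metis
  qed
  show "rmod_hom Q M actQ (h ` J) (\<lambda>C. f (inv_into J h C))"
    unfolding rmod_hom_def
  proof (intro conjI ballI)
    fix C assume "C \<in> h ` J"
    then obtain x where x: "x \<in> J" and C: "C = h x" by blast
    have xR: "x \<in> carrier R" using x J_props(1) by blast
    show "f (inv_into J h C) \<in> carrier M" using C descend[OF x] f_props x by auto
    show "f (inv_into J h (C \<oplus>\<^bsub>Q\<^esub> D)) = f (inv_into J h C) \<oplus>\<^bsub>M\<^esub> f (inv_into J h D)"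
      if "D \<in> h ` J" for D
    proof -
      obtain y where y: "y \<in> J" and D: "D = h y" using \<open>D \<in> h ` J\<close> by blast
      have "C \<oplus>\<^bsub>Q\<^esub> D = h (x \<oplus>\<^bsub>R\<^esub> y)"
        using C D ring_hom_add[OF hom xR] y J_props(1) by auto
      then show ?thesis
        using C D descend x y J_props(3) f_props by simp
    qed
    show "f (inv_into J h (C \<otimes>\<^bsub>Q\<^esub> D)) = actQ (f (inv_into J h C)) D"
      if "D \<in> carrier Q" for D
    proof -
      obtain r where r: "r \<in> carrier R" and D: "D = h r" using \<open>D \<in> carrier Q\<close> surj by blast
      have "C \<otimes>\<^bsub>Q\<^esub> D = h (x \<otimes>\<^bsub>R\<^esub> r)" using C D ring_hom_mult[OF hom xR r] by simp
      then have "f (inv_into J h (C \<otimes>\<^bsub>Q\<^esub> D)) = act (f x) r"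
        using descend x r J_props(5) f_props by simp
      then show ?thesis using C D compat descend[OF x] f_props x r by simp
    qed
  qed
qed

text \<open>An R-linear map g defined on all of R is right multiplication by g(1); it kills ker h,
  since ker h annihilates M when the action factors through h.\<close>

lemma rmod_hom_kills_kernel:
  assumes g: "rmod_hom R M act (carrier R) g" and k: "k \<in> carrier R" and hk: "h k = \<zero>\<^bsub>Q\<^esub>"
  shows "g k = \<zero>\<^bsub>M\<^esub>"
proof -
  note g_props = g[unfolded rmod_hom_def]
  have one: "\<one>\<^bsub>R\<^esub> \<in> carrier R" and zero: "\<zero>\<^bsub>R\<^esub> \<in> carrier R"
    using ring_R by (auto intro: ring.ring_simprules)
  have g1: "g \<one>\<^bsub>R\<^esub> \<in> carrier M" using g_props one by blast
  have "g k = g (\<one>\<^bsub>R\<^esub> \<otimes>\<^bsub>R\<^esub> k)" using ring_R k by (simp add: ring.ring_simprules)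
  also have "\<dots> = act (g \<one>\<^bsub>R\<^esub>) k" using g_props one k by blast
  also have "\<dots> = actQ (g \<one>\<^bsub>R\<^esub>) (h \<zero>\<^bsub>R\<^esub>)"
    using compat[OF g1 k] hk ring_hom_zero[OF hom ring_R ring_Q] by simp
  also have "\<dots> = \<zero>\<^bsub>M\<^esub>" using compat[OF g1 zero] right_module_act_zero[OF module g1] by simp
  finally show ?thesis .
qed

theorem aleph0_injective_descends:
  assumes inj: "aleph0_injective R M act"
  shows "aleph0_injective Q M actQ"
  unfolding aleph0_injective_def
proof (intro allI impI, elim conjE)
  fix Jb fb
  assume Jb: "countably_generated_right_ideal Q Jb" and fb: "rmod_hom Q M actQ Jb fb"
  obtain J where J: "countably_generated_right_ideal R J" and hJ: "h ` J = Jb"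
    using countably_generated_lift[OF ring_R ring_Q hom surj Jb] by blast
  have JR: "J \<subseteq> carrier R"
    using J right_idealD(1) unfolding countably_generated_right_ideal_def by blast
  have "rmod_hom R M act J (\<lambda>x. fb (h x))"
    using rmod_hom_pullback[OF JR _ fb] hJ by blast
  then obtain g where g: "rmod_hom R M act (carrier R) g" and ext: "\<forall>x\<in>J. g x = fb (h x)"
    using inj J unfolding aleph0_injective_def by blast
  have descent: "rmod_hom Q M actQ (h ` carrier R) (\<lambda>C. g (inv_into (carrier R) h C))"
    "\<And>x. x \<in> carrier R \<Longrightarrow> g (inv_into (carrier R) h (h x)) = g x"
    using rmod_hom_descend[OF right_ideal_carrier[OF ring_R] g] rmod_hom_kills_kernel[OF g]
    by blast+
  show "\<exists>g'. rmod_hom Q M actQ (carrier Q) g' \<and> (\<forall>C\<in>Jb. g' C = fb C)"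
  proof (intro exI conjI ballI)
    show "rmod_hom Q M actQ (carrier Q) (\<lambda>C. g (inv_into (carrier R) h C))"
      using descent(1) by (simp only: surj)
    fix C assume "C \<in> Jb"
    then obtain x where x: "x \<in> J" and C: "C = h x" using hJ by blast
    then show "g (inv_into (carrier R) h C) = fb C" using descent(2) ext JR by auto
  qed
qed

theorem aleph0_injective_ascends:
  assumes kills: "\<And>J f k. right_ideal R J \<Longrightarrow> rmod_hom R M act J f \<Longrightarrow> k \<in> J \<Longrightarrow>
      h k = \<zero>\<^bsub>Q\<^esub> \<Longrightarrow> f k = \<zero>\<^bsub>M\<^esub>"
    and inj: "aleph0_injective Q M actQ"
  shows "aleph0_injective R M act"
  unfolding aleph0_injective_def
proof (intro allI impI, elim conjE)
  fix J f assume J: "countably_generated_right_ideal R J" and f: "rmod_hom R M act J f"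
  have JR: "right_ideal R J" using J unfolding countably_generated_right_ideal_def by blast
  have descent: "rmod_hom Q M actQ (h ` J) (\<lambda>C. f (inv_into J h C))"
    "\<And>x. x \<in> J \<Longrightarrow> f (inv_into J h (h x)) = f x"
    using rmod_hom_descend[OF JR f] kills[OF JR f] by blast+
  obtain gb where gb: "rmod_hom Q M actQ (carrier Q) gb"
    and ext: "\<forall>C\<in>h ` J. gb C = f (inv_into J h C)"
    using inj countably_generated_image[OF ring_R ring_Q hom surj J] descent(1)
    unfolding aleph0_injective_def by blast
  show "\<exists>g. rmod_hom R M act (carrier R) g \<and> (\<forall>x\<in>J. g x = f x)"
  proof (intro exI conjI ballI)
    show "rmod_hom R M act (carrier R) (\<lambda>x. gb (h x))"
      using rmod_hom_pullback[OF subset_refl _ gb] surj by blast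
    show "gb (h x) = f x" if x: "x \<in> J" for x
      using ext descent(2)[OF x] x by simp
  qed
qed

end

section \<open>The quotient by an ideal inside the annihilator\<close>

lemma quot_act_coset:
  assumes I: "ideal I R" and M: "right_module R M act" and ann: "I \<subseteq> annihilator R M act"
    and m: "m \<in> carrier M" and r: "r \<in> carrier R"
  shows "quot_act act m (I +>\<^bsub>R\<^esub> r) = act m r"
proof -
  interpret ideal I R by (rule I)
  interpret M: abelian_group M using M unfolding right_module_def by blast
  \<comment> \<open>Whichever representative s = k + r of the coset is chosen, the term m k vanishes.\<close>
  have "r \<in> I +>\<^bsub>R\<^esub> r" using a_rcosI[of "\<zero>\<^bsub>R\<^esub>" I r] a_subset r by simp
  then have "(SOME s. s \<in> I +>\<^bsub>R\<^esub> r) \<in> I +>\<^bsub>R\<^esub> r" by (rule someI)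
  then obtain k where k: "k \<in> I" and s: "(SOME s. s \<in> I +>\<^bsub>R\<^esub> r) = k \<oplus>\<^bsub>R\<^esub> r"
    by (auto simp: a_r_coset_def')
  have kR: "k \<in> carrier R" using k a_subset by blast
  have "quot_act act m (I +>\<^bsub>R\<^esub> r) = act m k \<oplus>\<^bsub>M\<^esub> act m r"
    unfolding quot_act_def s using M m kR r unfolding right_module_def by blast
  also have "\<dots> = act m r"
    using ann k m M r unfolding annihilator_def right_module_def by auto
  finally show ?thesis .
qed

lemma quotient_kernel:
  assumes I: "ideal I R" and x: "x \<in> carrier R" and hx: "I +>\<^bsub>R\<^esub> x = \<zero>\<^bsub>R Quot I\<^esub>"
  shows "x \<in> I"
  using ideal.rcos_const_imp_mem[OF I x] hx by (simp add: FactRing_def)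

lemma quotient_factored_action:
  assumes I: "ideal I R" and M: "right_module R M act" and ann: "I \<subseteq> annihilator R M act"
  shows "factored_action R (R Quot I) (a_r_coset R I) M act (quot_act act)"
proof (rule factored_action.intro)
  show "ring R" using M unfolding right_module_def by blast
  show "ring (R Quot I)" by (rule ideal.quotient_is_ring[OF I])
  show "a_r_coset R I \<in> ring_hom R (R Quot I)" by (rule ideal.rcos_ring_hom[OF I])
  show "a_r_coset R I ` carrier R = carrier (R Quot I)"
    by (auto simp: FactRing_def A_RCOSETS_def')
  show "right_module R M act" by (rule M)
  show "quot_act act m (I +>\<^bsub>R\<^esub> r) = act m r" if "m \<in> carrier M" "r \<in> carrier R" for m r
    using quot_act_coset[OF I M ann that] .
qed


section \<open>Right full idempotence\<close>

lemma rmod_hom_finsum_zero: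
  fixes n :: nat
  assumes R: "ring R" and MG: "abelian_group M" and J: "right_ideal R J"
    and f: "rmod_hom R M act J f"
    and c: "\<And>i. i < n \<Longrightarrow> c i \<in> J \<and> f (c i) = \<zero>\<^bsub>M\<^esub>"
  shows "finsum R c {..<n} \<in> J \<and> f (finsum R c {..<n}) = \<zero>\<^bsub>M\<^esub>"
proof -
  interpret ring R by (rule R)
  interpret M: abelian_group M by (rule MG)
  note J_props = right_idealD[OF J] and f_props = f[unfolded rmod_hom_def]
  show ?thesis using c
  proof (induction n)
    case 0
    then show ?case using J_props(2) rmod_hom_zero[OF R MG J f] by simp
  next
    case (Suc n)
    have IH: "finsum R c {..<n} \<in> J" "f (finsum R c {..<n}) = \<zero>\<^bsub>M\<^esub>"
      using Suc by auto
    have cn: "c n \<in> J" "f (c n) = \<zero>\<^bsub>M\<^esub>" using Suc.prems by auto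
    have "finsum R c {..<Suc n} = c n \<oplus>\<^bsub>R\<^esub> finsum R c {..<n}"
      unfolding lessThan_Suc using Suc.prems J_props(1) by (subst finsum_insert) auto
    then show ?case using IH cn J_props(3) f_props by auto
  qed
qed

text \<open>In a right fully idempotent ring an R-linear map on J vanishes on every right ideal
  K \<subseteq> J annihilating M: each x \<in> K = K^2 is a sum of products a b with a \<in> K \<subseteq> J and
  b \<in> K, and f (a b) = f(a) b = 0.\<close>

lemma rmod_hom_vanishes_on_annihilating_right_ideal:
  assumes M: "right_module R M act" and fi: "right_fully_idempotent R"
    and J: "right_ideal R J" and f: "rmod_hom R M act J f"
    and K: "right_ideal R K" and KJ: "K \<subseteq> J" and K_ann: "K \<subseteq> annihilator R M act"
    and x: "x \<in> K"
  shows "f x = \<zero>\<^bsub>M\<^esub>"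
proof -
  have R: "ring R" and MG: "abelian_group M" using M unfolding right_module_def by auto
  have "x \<in> ideal_square R K" using fi K x unfolding right_fully_idempotent_def by blast
  then obtain n :: nat and a b where ab: "\<forall>i<n. a i \<in> K \<and> b i \<in> K"
    and x_sum: "x = finsum R (\<lambda>i. a i \<otimes>\<^bsub>R\<^esub> b i) {..<n}"
    unfolding ideal_square_def by blast
  have terms: "a i \<otimes>\<^bsub>R\<^esub> b i \<in> J \<and> f (a i \<otimes>\<^bsub>R\<^esub> b i) = \<zero>\<^bsub>M\<^esub>" if i: "i < n" for i
  proof -
    have a: "a i \<in> J" and b: "b i \<in> annihilator R M act" using ab i KJ K_ann by auto
    then have bR: "b i \<in> carrier R" unfolding annihilator_def by blast
    have "f (a i \<otimes>\<^bsub>R\<^esub> b i) = act (f (a i)) (b i)" using f a bR unfolding rmod_hom_def by blast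
    also have "\<dots> = \<zero>\<^bsub>M\<^esub>" using b f a unfolding annihilator_def rmod_hom_def by blast
    finally show ?thesis using right_idealD(5)[OF J a bR] by blast
  qed
  show ?thesis
    using rmod_hom_finsum_zero[where c = "\<lambda>i. a i \<otimes>\<^bsub>R\<^esub> b i", OF R MG J f terms] x_sum
    by simp
qed


theorem proposition1p3:
  fixes R :: "('r, 'c) ring_scheme" and M :: "('m, 'd) ring_scheme"
    and act :: "'m \<Rightarrow> 'r \<Rightarrow> 'm" and I :: "'r set"
  assumes "ring R"
    and "right_module R M act"
    and "ideal I R"
    and "I \<subseteq> annihilator R M act"
  shows "(aleph0_injective R M act \<longrightarrow> aleph0_injective (R Quot I) M (quot_act act))
       \<and> (right_fully_idempotent R \<and> aleph0_injective (R Quot I) M (quot_act act)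
           \<longrightarrow> aleph0_injective R M act)"
proof -
  interpret factored_action R "R Quot I" "a_r_coset R I" M act "quot_act act"
    by (rule quotient_factored_action[OF assms(3,2,4)])
  have kills: "f k = \<zero>\<^bsub>M\<^esub>"
    if fi: "right_fully_idempotent R" and J: "right_ideal R J" and f: "rmod_hom R M act J f"
      and k: "k \<in> J" and hk: "I +>\<^bsub>R\<^esub> k = \<zero>\<^bsub>R Quot I\<^esub>" for J f k
  proof -
    have "k \<in> I" using quotient_kernel[OF assms(3) _ hk] k right_idealD(1)[OF J] by blast
    moreover have "right_ideal R (J \<inter> I)"
      using right_ideal_Int[OF assms(1) J ideal_imp_right_ideal[OF assms(3)]] .
    ultimately show ?thesis
      using rmod_hom_vanishes_on_annihilating_right_ideal[OF assms(2) fi J f] k assms(4) by blast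
  qed
  show ?thesis using aleph0_injective_descends aleph0_injective_ascends kills by blast
qed

end
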